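(* Let $\lambda_1\ge\dots\ge\lambda_r>0>\lambda_{r+1}\ge\dots\ge\lambda_n$, $\Lambda_X=\operatorname{diag}(\lambda_1,\dots,\lambda_r)$, $\Lambda_S=\operatorname{diag}(\lambda_{r+1},\dots,\lambda_n)$, $d=\sqrt{\min\{r,n-r\}}$. Let $H_X\in\mathbb S^r$, $H_S\in\mathbb S^{n-r}$, $H_O\in\mathbb R^{(n-r)\times r}$ satisfy $\|H_X\|_2+\|H_S\|_2\le\frac{\lambda_r-\lambda_{r+1}}{2nd}$, and let $W_O^{(0)}$ be the solution of $W_O(\Lambda_X+H_X)-(\Lambda_S+H_S)W_O=H_O$. Then $$\|W_O^{(0)}-\Theta_0\circ H_O\|_2\le\frac{2nd}{(\lambda_r-\lambda_{r+1})^2}\|H_O\|_2(\|H_X\|_2+\|H_S\|_2),$$ where $\Theta_0\in\mathbb R^{(n-r)\times r}$ has entries $(\Theta_0)_{ij}=\frac{1}{\lambda_j-\lambda_{r+i}}$.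
   Context: $\mathbb S^p$ denotes real symmetric $p\times p$ matrices; $\|\cdot\|_2$ is the spectral norm; $\circ$ is the Hadamard product. *)

theory Defs
  imports Complex_Main
begin

text \<open>Matrices are represented as functions nat \<Rightarrow> nat \<Rightarrow> real with explicit
  dimensions; an m x p matrix A has entries A i j for i < m, j < p (0-based).\<close>

definition specnorm :: "nat \<Rightarrow> nat \<Rightarrow> (nat \<Rightarrow> nat \<Rightarrow> real) \<Rightarrow> real" where
  "specnorm m p A = Sup {sqrt (\<Sum>i<m. (\<Sum>j<p. A i j * x j)^2) | x.
                            (\<Sum>j<p. (x j)^2) \<le> 1}"

definition symmetric_mat :: "nat \<Rightarrow> (nat \<Rightarrow> nat \<Rightarrow> real) \<Rightarrow> bool" where
  "symmetric_mat k A \<longleftrightarrow> (\<forall>i<k. \<forall>j<k. A i j = A j i)"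

definition diag_mat :: "(nat \<Rightarrow> real) \<Rightarrow> nat \<Rightarrow> nat \<Rightarrow> real" where
  "diag_mat v i j = (if i = j then v i else 0)"

end

theory Submission imports Defs "HOL-Analysis.L2_Norm" begin

text \<open>Writing \<open>\<Theta>\<close> for the matrix of reciprocal gaps, the Sylvester equation gives
  \<open>W - \<Theta> \<circ> H\<^sub>O = \<Theta> \<circ> (H\<^sub>S W - W H\<^sub>X)\<close>. Since every entry of \<open>\<Theta>\<close> is at most \<open>1/\<delta>\<close>
  with \<open>\<delta> = \<lambda>\<^sub>r - \<lambda>\<^sub>r\<^sub>+\<^sub>1\<close>, passing through the Frobenius norm shows that a Hadamard
  product with \<open>\<Theta>\<close> costs at most a factor \<open>d/\<delta>\<close> in spectral norm. Hence the residual
  \<open>x = \<parallel>W - \<Theta> \<circ> H\<^sub>O\<parallel>\<close> satisfies \<open>x \<le> (d/\<delta>) h \<parallel>W\<parallel> \<le> (d/\<delta>) h ((d/\<delta>) \<parallel>H\<^sub>O\<parallel> + x)\<close>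
  with \<open>h = \<parallel>H\<^sub>X\<parallel> + \<parallel>H\<^sub>S\<parallel>\<close>, and the smallness hypothesis makes \<open>(d/\<delta>) h \<le> 1/2\<close>, so
  \<open>x \<le> 2 (d/\<delta>)\<^sup>2 h \<parallel>H\<^sub>O\<parallel>\<close>.\<close>

definition mat_vec :: "nat \<Rightarrow> (nat \<Rightarrow> nat \<Rightarrow> real) \<Rightarrow> (nat \<Rightarrow> real) \<Rightarrow> nat \<Rightarrow> real" where
  "mat_vec p A x i = (\<Sum>j<p. A i j * x j)"

definition mat_mult :: "nat \<Rightarrow> (nat \<Rightarrow> nat \<Rightarrow> real) \<Rightarrow> (nat \<Rightarrow> nat \<Rightarrow> real) \<Rightarrow> nat \<Rightarrow> nat \<Rightarrow> real" where
  "mat_mult q A B i j = (\<Sum>k<q. A i k * B k j)"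

definition frobenius :: "nat \<Rightarrow> nat \<Rightarrow> (nat \<Rightarrow> nat \<Rightarrow> real) \<Rightarrow> real" where
  "frobenius m p A = sqrt (\<Sum>i<m. \<Sum>j<p. (A i j)^2)"

lemma specnorm_eq_Sup_L2_set:
  "specnorm m p A = Sup {L2_set (mat_vec p A x) {..<m} | x. L2_set x {..<p} \<le> 1}"
  unfolding specnorm_def L2_set_def mat_vec_def by simp

lemma frobenius_eq_L2_set_rows: "frobenius m p A = L2_set (\<lambda>i. L2_set (A i) {..<p}) {..<m}"
  unfolding frobenius_def L2_set_def by (simp add: sum_nonneg)

lemma L2_set_mat_vec_le_frobenius:
  "L2_set (mat_vec p A x) {..<m} \<le> frobenius m p A * L2_set x {..<p}"
proof -
  have "(mat_vec p A x i)^2 \<le> (L2_set (A i) {..<p} * L2_set x {..<p})^2" for i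
  proof -
    have "\<bar>mat_vec p A x i\<bar> \<le> (\<Sum>j<p. \<bar>A i j\<bar> * \<bar>x j\<bar>)"
      unfolding mat_vec_def by (rule order_trans[OF sum_abs]) (simp add: abs_mult)
    also have "\<dots> \<le> L2_set (A i) {..<p} * L2_set x {..<p}" by (rule L2_set_mult_ineq)
    finally show ?thesis
      by (metis abs_ge_zero order_trans power2_abs power_mono)
  qed
  hence "L2_set (mat_vec p A x) {..<m}
      \<le> L2_set (\<lambda>i. L2_set (A i) {..<p} * L2_set x {..<p}) {..<m}"
    unfolding L2_set_def by (intro real_sqrt_le_mono sum_mono) auto
  also have "\<dots> = frobenius m p A * L2_set x {..<p}"
    by (simp add: frobenius_eq_L2_set_rows L2_set_left_distrib)
  finally show ?thesis .
qed

lemma L2_set_mat_vec_unit_le_frobenius: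
  "L2_set x {..<p} \<le> 1 \<Longrightarrow> L2_set (mat_vec p A x) {..<m} \<le> frobenius m p A"
  using L2_set_mat_vec_le_frobenius[of p A x m]
  by (metis L2_set_nonneg frobenius_eq_L2_set_rows mult_left_le order_trans)

lemma bdd_above_specnorm_set:
  "bdd_above {L2_set (mat_vec p A x) {..<m} | x. L2_set x {..<p} \<le> 1}"
  unfolding bdd_above_def using L2_set_mat_vec_unit_le_frobenius by blast

lemma specnorm_upper:
  "L2_set x {..<p} \<le> 1 \<Longrightarrow> L2_set (mat_vec p A x) {..<m} \<le> specnorm m p A"
  unfolding specnorm_eq_Sup_L2_set by (rule cSup_upper[OF _ bdd_above_specnorm_set]) blast

lemma specnorm_nonneg: "0 \<le> specnorm m p A"
  using specnorm_upper[of "\<lambda>_. 0" p A m] by (simp add: L2_set_0' order_trans[OF L2_set_nonneg])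

lemma specnorm_least:
  assumes "\<And>x. L2_set x {..<p} \<le> 1 \<Longrightarrow> L2_set (mat_vec p A x) {..<m} \<le> c"
  shows "specnorm m p A \<le> c"
proof -
  have "L2_set (\<lambda>_. 0) {..<p} \<le> 1" by (simp add: L2_set_0')
  hence "{L2_set (mat_vec p A x) {..<m} | x. L2_set x {..<p} \<le> 1} \<noteq> {}" by blast
  thus ?thesis
    unfolding specnorm_eq_Sup_L2_set by (rule cSup_least) (use assms in blast)
qed

lemma specnorm_le_frobenius: "specnorm m p A \<le> frobenius m p A"
  by (rule specnorm_least) (rule L2_set_mat_vec_unit_le_frobenius)

lemma L2_set_mat_vec_le_specnorm:
  "L2_set (mat_vec p A x) {..<m} \<le> specnorm m p A * L2_set x {..<p}"
proof (cases "L2_set x {..<p} = 0")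
  case True
  hence "mat_vec p A x = (\<lambda>_. 0)"
    by (auto simp: L2_set_eq_0_iff mat_vec_def)
  thus ?thesis using True by (simp add: L2_set_0')
next
  case False
  define c where "c = L2_set x {..<p}"
  have c: "c > 0" using False c_def by (simp add: order_le_neq_trans)
  define y where "y = (\<lambda>j. 1 / c * x j)"
  have "L2_set y {..<p} = 1 / c * c"
    unfolding y_def c_def by (rule L2_set_right_distrib[symmetric]) (use c in simp)
  hence "L2_set (mat_vec p A y) {..<m} \<le> specnorm m p A"
    using c by (simp add: specnorm_upper)
  moreover have "mat_vec p A y = (\<lambda>i. 1 / c * mat_vec p A x i)"
    unfolding mat_vec_def y_def by (auto simp: sum_distrib_left algebra_simps)
  moreover have "L2_set (\<lambda>i. 1 / c * mat_vec p A x i) {..<m} = 1 / c * L2_set (mat_vec p A x) {..<m}"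
    by (rule L2_set_right_distrib[symmetric]) (use c in simp)
  ultimately have "1 / c * L2_set (mat_vec p A x) {..<m} \<le> specnorm m p A" by simp
  thus ?thesis using c by (simp add: c_def field_simps)
qed

lemma specnorm_cong:
  "(\<And>i j. i < m \<Longrightarrow> j < p \<Longrightarrow> A i j = B i j) \<Longrightarrow> specnorm m p A = specnorm m p B"
  unfolding specnorm_def by (intro arg_cong[where f=Sup]) (auto intro!: sum.cong)

lemma specnorm_add_le: "specnorm m p (\<lambda>i j. A i j + B i j) \<le> specnorm m p A + specnorm m p B"
proof (rule specnorm_least)
  fix x assume x: "L2_set x {..<p} \<le> 1"
  have "mat_vec p (\<lambda>i j. A i j + B i j) x = (\<lambda>i. mat_vec p A x i + mat_vec p B x i)"
    unfolding mat_vec_def by (auto simp: sum.distrib algebra_simps)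
  hence "L2_set (mat_vec p (\<lambda>i j. A i j + B i j) x) {..<m}
      \<le> L2_set (mat_vec p A x) {..<m} + L2_set (mat_vec p B x) {..<m}"
    by (simp add: L2_set_triangle_ineq)
  also have "\<dots> \<le> specnorm m p A + specnorm m p B"
    using specnorm_upper[OF x] by (simp add: add_mono)
  finally show "L2_set (mat_vec p (\<lambda>i j. A i j + B i j) x) {..<m} \<le> specnorm m p A + specnorm m p B" .
qed

lemma specnorm_diff_le: "specnorm m p (\<lambda>i j. A i j - B i j) \<le> specnorm m p A + specnorm m p B"
proof -
  have "specnorm m p (\<lambda>i j. - B i j) = specnorm m p B"
    unfolding specnorm_def by (simp add: sum_negf)
  thus ?thesis using specnorm_add_le[of m p A "\<lambda>i j. - B i j"] by simp
qed

lemma specnorm_mat_mult_le: "specnorm m p (mat_mult q A B) \<le> specnorm m q A * specnorm q p B"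
proof (rule specnorm_least)
  fix x assume x: "L2_set x {..<p} \<le> 1"
  have "mat_vec p (mat_mult q A B) x = mat_vec q A (mat_vec p B x)"
    unfolding mat_vec_def mat_mult_def
    by (auto simp: sum_distrib_left sum_distrib_right mult.assoc intro: sum.swap)
  hence "L2_set (mat_vec p (mat_mult q A B) x) {..<m} \<le> specnorm m q A * L2_set (mat_vec p B x) {..<q}"
    using L2_set_mat_vec_le_specnorm by simp
  also have "\<dots> \<le> specnorm m q A * specnorm q p B"
    using specnorm_upper[OF x] specnorm_nonneg by (simp add: mult_left_mono)
  finally show "L2_set (mat_vec p (mat_mult q A B) x) {..<m} \<le> specnorm m q A * specnorm q p B" .
qed

lemma sum_power2_column_le_specnorm: "j < p \<Longrightarrow> (\<Sum>i<m. (A i j)^2) \<le> (specnorm m p A)^2"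
proof -
  assume j: "j < p"
  define e where "e = (\<lambda>k. if k = j then 1 else 0::real)"
  have "L2_set e {..<p} = 1" unfolding e_def L2_set_def using j
    by (simp add: if_distrib[of "\<lambda>t. t^2"] sum.delta cong: if_cong)
  hence "L2_set (mat_vec p A e) {..<m} \<le> specnorm m p A" by (simp add: specnorm_upper)
  moreover have "mat_vec p A e = (\<lambda>i. A i j)" unfolding mat_vec_def e_def using j
    by (auto simp: if_distrib[of "\<lambda>t. _ * t"] sum.delta cong: if_cong)
  ultimately have "sqrt (\<Sum>i<m. (A i j)^2) \<le> specnorm m p A" by (simp add: L2_set_def)
  thus ?thesis by (rule sqrt_le_D)
qed

text \<open>Testing \<open>A\<close> on its own \<open>i\<close>-th row gives \<open>\<parallel>row\<^sub>i\<parallel>\<^sup>2 \<le> (A row\<^sub>i)\<^sub>i \<le> \<parallel>A\<parallel> \<parallel>row\<^sub>i\<parallel>\<close>.\<close>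

lemma sum_power2_row_le_specnorm: "i < m \<Longrightarrow> (\<Sum>j<p. (A i j)^2) \<le> (specnorm m p A)^2"
proof -
  assume i: "i < m"
  define L where "L = L2_set (A i) {..<p}"
  have "L^2 = mat_vec p A (A i) i" unfolding mat_vec_def L_def L2_set_def
    by (simp add: sum_nonneg power2_eq_square)
  also have "\<dots> \<le> L2_set (mat_vec p A (A i)) {..<m}" using i by (intro member_le_L2_set) auto
  also have "\<dots> \<le> specnorm m p A * L" unfolding L_def by (rule L2_set_mat_vec_le_specnorm)
  finally have "L \<le> specnorm m p A" using specnorm_nonneg[of m p A]
    by (cases "L = 0") (auto simp: power2_eq_square L_def order_le_neq_trans)
  hence "L^2 \<le> (specnorm m p A)^2" by (simp add: L_def power_mono)
  thus ?thesis unfolding L_def L2_set_def by (simp add: sum_nonneg)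
qed

lemma frobenius_le_specnorm: "frobenius m p A \<le> sqrt (real (min m p)) * specnorm m p A"
proof -
  have "(\<Sum>i<m. \<Sum>j<p. (A i j)^2) \<le> real (min m p) * (specnorm m p A)^2"
  proof (cases "m \<le> p")
    case True
    have "(\<Sum>i<m. \<Sum>j<p. (A i j)^2) \<le> (\<Sum>i<m. (specnorm m p A)^2)"
      by (rule sum_mono) (simp add: sum_power2_row_le_specnorm)
    thus ?thesis using True by simp
  next
    case False
    have "(\<Sum>i<m. \<Sum>j<p. (A i j)^2) = (\<Sum>j<p. \<Sum>i<m. (A i j)^2)" by (rule sum.swap)
    also have "\<dots> \<le> (\<Sum>j<p. (specnorm m p A)^2)"
      by (rule sum_mono) (simp add: sum_power2_column_le_specnorm)
    finally show ?thesis using False by simp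
  qed
  hence "frobenius m p A \<le> sqrt (real (min m p) * (specnorm m p A)^2)"
    unfolding frobenius_def by simp
  also have "\<dots> = sqrt (real (min m p)) * specnorm m p A"
    using specnorm_nonneg[of m p A] by (simp add: real_sqrt_mult)
  finally show ?thesis .
qed

lemma frobenius_hadamard_le:
  assumes "0 \<le> c" and "\<And>i j. i < m \<Longrightarrow> j < p \<Longrightarrow> \<bar>T i j\<bar> \<le> c"
  shows "frobenius m p (\<lambda>i j. T i j * A i j) \<le> c * frobenius m p A"
proof -
  have "(T i j * A i j)^2 \<le> c^2 * (A i j)^2" if "i < m" "j < p" for i j
  proof -
    have "\<bar>T i j\<bar>^2 \<le> c^2" using assms(2)[OF that] by (rule power_mono) simp
    thus ?thesis by (simp add: power_mult_distrib mult_right_mono)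
  qed
  hence "(\<Sum>i<m. \<Sum>j<p. (T i j * A i j)^2) \<le> (\<Sum>i<m. \<Sum>j<p. c^2 * (A i j)^2)"
    by (intro sum_mono) simp
  hence "(\<Sum>i<m. \<Sum>j<p. (T i j * A i j)^2) \<le> c^2 * (\<Sum>i<m. \<Sum>j<p. (A i j)^2)"
    by (simp add: sum_distrib_left)
  hence "frobenius m p (\<lambda>i j. T i j * A i j) \<le> sqrt (c^2 * (\<Sum>i<m. \<Sum>j<p. (A i j)^2))"
    unfolding frobenius_def by simp
  also have "\<dots> = c * frobenius m p A"
    unfolding frobenius_def using assms(1) by (simp add: real_sqrt_mult)
  finally show ?thesis .
qed

lemma specnorm_hadamard_le:
  assumes "0 \<le> c" and "\<And>i j. i < m \<Longrightarrow> j < p \<Longrightarrow> \<bar>T i j\<bar> \<le> c"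
  shows "specnorm m p (\<lambda>i j. T i j * A i j) \<le> c * sqrt (real (min m p)) * specnorm m p A"
proof -
  have "specnorm m p (\<lambda>i j. T i j * A i j) \<le> c * frobenius m p A"
    using order_trans[OF specnorm_le_frobenius frobenius_hadamard_le[OF assms]] .
  also have "\<dots> \<le> c * (sqrt (real (min m p)) * specnorm m p A)"
    using assms(1) frobenius_le_specnorm by (rule mult_left_mono[rotated])
  finally show ?thesis by (simp add: mult.assoc)
qed

lemma sum_mult_diag_mat_add:
  "j < p \<Longrightarrow> (\<Sum>k<p. W k * (diag_mat v k j + H k j)) = W j * v j + (\<Sum>k<p. W k * H k j)"
  by (simp add: distrib_left sum.distrib diag_mat_def if_distrib[of "\<lambda>t. _ * t"] sum.delta
      cong: if_cong)

lemma sum_diag_mat_add_mult: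
  "i < m \<Longrightarrow> (\<Sum>k<m. (diag_mat v i k + H i k) * W k) = v i * W i + (\<Sum>k<m. H i k * W k)"
  by (simp add: distrib_right sum.distrib diag_mat_def if_distrib[of "\<lambda>t. t * _"] sum.delta
      cong: if_cong)

lemma sylvester_diag_entry:
  assumes "i < m" "j < p" "a j \<noteq> b i"
    and "(\<Sum>k<p. W i k * (diag_mat a k j + HX k j))
       - (\<Sum>k<m. (diag_mat b i k + HS i k) * W k j) = HO i j"
  shows "W i j - HO i j / (a j - b i) = (mat_mult m HS W i j - mat_mult p W HX i j) / (a j - b i)"
proof -
  have "HO i j = W i j * (a j - b i) - (mat_mult m HS W i j - mat_mult p W HX i j)"
    using assms(4) sum_mult_diag_mat_add[OF assms(2), of "W i" a HX]
      sum_diag_mat_add_mult[OF assms(1), of b HS "\<lambda>k. W k j"]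
    unfolding mat_mult_def by (simp add: algebra_simps)
  thus ?thesis using assms(3) by (simp add: field_simps)
qed

lemma le_twice_of_le_contraction:
  fixes x y q :: real
  assumes "x \<le> q * (y + x)" and "0 \<le> q" and "q \<le> 1/2" and "0 \<le> y"
  shows "x \<le> 2 * q * y"
proof (cases "0 \<le> x")
  case True
  have "x * (1 / 2) \<le> x * (1 - q)" using True assms(3) by (intro mult_left_mono) simp_all
  also have "\<dots> \<le> q * y" using assms(1) by (simp add: algebra_simps)
  finally show ?thesis by simp
next
  case False
  moreover have "0 \<le> 2 * q * y" using assms(2,4) by simp
  ultimately show ?thesis by simp
qed

lemma specnorm_divide_gap_le:
  assumes gap: "\<And>i j. i < m \<Longrightarrow> j < p \<Longrightarrow> \<delta> \<le> a j - b i" and "0 < \<delta>"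
  shows "specnorm m p (\<lambda>i j. A i j / (a j - b i)) \<le> sqrt (real (min m p)) / \<delta> * specnorm m p A"
proof -
  have "\<bar>1 / (a j - b i)\<bar> \<le> 1 / \<delta>" if "i < m" "j < p" for i j
    using gap[OF that] \<open>0 < \<delta>\<close> by (simp add: frac_le)
  from specnorm_hadamard_le[of "1 / \<delta>" m p "\<lambda>i j. 1 / (a j - b i)" A, OF _ this]
  show ?thesis using \<open>0 < \<delta>\<close> by simp
qed

lemma specnorm_sylvester_diag_residual_le:
  fixes a b :: "nat \<Rightarrow> real" and HX HS HO W :: "nat \<Rightarrow> nat \<Rightarrow> real"
  assumes gap: "\<And>i j. i < m \<Longrightarrow> j < p \<Longrightarrow> \<delta> \<le> a j - b i" and "0 < \<delta>"
    and sylv: "\<And>i j. i < m \<Longrightarrow> j < p \<Longrightarrow>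
        (\<Sum>k<p. W i k * (diag_mat a k j + HX k j))
      - (\<Sum>k<m. (diag_mat b i k + HS i k) * W k j) = HO i j"
  shows "specnorm m p (\<lambda>i j. W i j - HO i j / (a j - b i))
     \<le> sqrt (real (min m p)) / \<delta> * (specnorm p p HX + specnorm m m HS) * specnorm m p W"
proof -
  define c where "c = sqrt (real (min m p)) / \<delta>"
  have "0 \<le> c" using \<open>0 < \<delta>\<close> by (simp add: c_def)
  have "specnorm m p (\<lambda>i j. W i j - HO i j / (a j - b i))
      = specnorm m p (\<lambda>i j. (mat_mult m HS W i j - mat_mult p W HX i j) / (a j - b i))"
  proof (rule specnorm_cong)
    fix i j assume ij: "i < m" "j < p"
    hence "a j \<noteq> b i" using gap[OF ij] \<open>0 < \<delta>\<close> by auto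
    from sylvester_diag_entry[where a=a and b=b and W=W and HX=HX and HS=HS and HO=HO,
        OF ij this sylv[OF ij]]
    show "W i j - HO i j / (a j - b i) = (mat_mult m HS W i j - mat_mult p W HX i j) / (a j - b i)" .
  qed
  also have "\<dots> \<le> c * specnorm m p (\<lambda>i j. mat_mult m HS W i j - mat_mult p W HX i j)"
    unfolding c_def by (rule specnorm_divide_gap_le[OF gap \<open>0 < \<delta>\<close>])
  also have "\<dots> \<le> c * (specnorm m m HS * specnorm m p W + specnorm m p W * specnorm p p HX)"
    using \<open>0 \<le> c\<close> by (intro mult_left_mono order_trans[OF specnorm_diff_le] add_mono
        specnorm_mat_mult_le)
  also have "\<dots> = c * (specnorm p p HX + specnorm m m HS) * specnorm m p W"
    by (simp add: algebra_simps)
  finally show ?thesis by (simp add: c_def)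
qed

lemma specnorm_sylvester_diag_first_order:
  fixes a b :: "nat \<Rightarrow> real" and HX HS HO W :: "nat \<Rightarrow> nat \<Rightarrow> real"
  assumes gap: "\<And>i j. i < m \<Longrightarrow> j < p \<Longrightarrow> \<delta> \<le> a j - b i" and "0 < \<delta>"
    and small: "sqrt (real (min m p)) * (specnorm p p HX + specnorm m m HS) \<le> \<delta> / 2"
    and sylv: "\<And>i j. i < m \<Longrightarrow> j < p \<Longrightarrow>
        (\<Sum>k<p. W i k * (diag_mat a k j + HX k j))
      - (\<Sum>k<m. (diag_mat b i k + HS i k) * W k j) = HO i j"
  shows "specnorm m p (\<lambda>i j. W i j - HO i j / (a j - b i))
     \<le> 2 * real (min m p) / \<delta>^2 * specnorm m p HO * (specnorm p p HX + specnorm m m HS)"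
proof -
  define c where "c = sqrt (real (min m p)) / \<delta>"
  define h where "h = specnorm p p HX + specnorm m m HS"
  define x where "x = specnorm m p (\<lambda>i j. W i j - HO i j / (a j - b i))"
  have "0 \<le> c" "0 \<le> h" "0 \<le> specnorm m p HO"
    using \<open>0 < \<delta>\<close> specnorm_nonneg by (simp_all add: c_def h_def add_nonneg_nonneg)
  have "specnorm m p W = specnorm m p (\<lambda>i j. HO i j / (a j - b i) + (W i j - HO i j / (a j - b i)))"
    by (rule specnorm_cong) simp
  also have "\<dots> \<le> specnorm m p (\<lambda>i j. HO i j / (a j - b i)) + x"
    unfolding x_def by (rule specnorm_add_le)
  also have "\<dots> \<le> c * specnorm m p HO + x"
    unfolding c_def using specnorm_divide_gap_le[OF gap \<open>0 < \<delta>\<close>] by (rule add_right_mono)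
  finally have "c * h * specnorm m p W \<le> c * h * (c * specnorm m p HO + x)"
    using \<open>0 \<le> c\<close> \<open>0 \<le> h\<close> by (simp add: mult_left_mono)
  with specnorm_sylvester_diag_residual_le[OF gap \<open>0 < \<delta>\<close> sylv]
  have "x \<le> (c * h) * (c * specnorm m p HO + x)" by (simp add: x_def c_def h_def)
  moreover have "c * h \<le> 1/2" using small \<open>0 < \<delta>\<close> by (simp add: c_def h_def field_simps)
  ultimately have "x \<le> 2 * (c * h) * (c * specnorm m p HO)"
    using \<open>0 \<le> c\<close> \<open>0 \<le> h\<close> \<open>0 \<le> specnorm m p HO\<close>
    by (intro le_twice_of_le_contraction) simp_all
  also have "\<dots> = 2 * real (min m p) / \<delta>^2 * specnorm m p HO * h"
    by (simp add: c_def power2_eq_square)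
  finally show ?thesis by (simp add: x_def h_def)
qed

theorem lemma14:
  fixes n r :: nat and lam :: "nat \<Rightarrow> real"
    and HX HS HO W :: "nat \<Rightarrow> nat \<Rightarrow> real"
  assumes sorted: "\<forall>i j. 1 \<le> i \<longrightarrow> i \<le> j \<longrightarrow> j \<le> n \<longrightarrow> lam j \<le> lam i"
    and r_pos: "1 \<le> r" and r_lt: "r < n"
    and lam_r: "lam r > 0" and lam_r1: "lam (r + 1) < 0"
    and HX_sym: "symmetric_mat r HX" and HS_sym: "symmetric_mat (n - r) HS"
    and small: "specnorm r r HX + specnorm (n - r) (n - r) HS
                  \<le> (lam r - lam (r + 1)) / (2 * n * sqrt (min r (n - r)))"
    and sylv: "\<forall>i < n - r. \<forall>j < r.
        (\<Sum>k<r. W i k * (diag_mat (\<lambda>t. lam (t + 1)) k j + HX k j))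
      - (\<Sum>k<n - r. (diag_mat (\<lambda>t. lam (r + t + 1)) i k + HS i k) * W k j)
      = HO i j"
  shows "specnorm (n - r) r (\<lambda>i j. W i j - HO i j / (lam (j + 1) - lam (r + i + 1)))
     \<le> 2 * n * sqrt (min r (n - r)) / (lam r - lam (r + 1))^2
         * specnorm (n - r) r HO * (specnorm r r HX + specnorm (n - r) (n - r) HS)"
proof -
  define \<delta> where "\<delta> = lam r - lam (r + 1)"
  define d where "d = sqrt (min r (n - r))"
  define h where "h = specnorm r r HX + specnorm (n - r) (n - r) HS"
  have "0 < \<delta>" using lam_r lam_r1 by (simp add: \<delta>_def)
  have "1 \<le> d" using r_pos r_lt by (simp add: d_def)
  have gap: "\<delta> \<le> lam (j + 1) - lam (r + i + 1)" if "i < n - r" "j < r" for i j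
  proof -
    have "lam r \<le> lam (j + 1)" "lam (r + i + 1) \<le> lam (r + 1)" using sorted that r_lt by auto
    thus ?thesis by (simp add: \<delta>_def)
  qed
  have "h \<le> \<delta> / (2 * n * d)" using small by (simp add: d_def h_def \<delta>_def)
  hence "d * h \<le> d * (\<delta> / (2 * n * d))" using \<open>1 \<le> d\<close> by (intro mult_left_mono) auto
  also have "\<dots> \<le> \<delta> / 2" using \<open>0 < \<delta>\<close> \<open>1 \<le> d\<close> r_lt by (simp add: field_simps)
  finally have "sqrt (real (min (n - r) r)) * h \<le> \<delta> / 2" by (simp add: d_def min.commute)
  from specnorm_sylvester_diag_first_order[OF gap \<open>0 < \<delta>\<close> this[unfolded h_def] sylv[rule_format]]
  have "specnorm (n - r) r (\<lambda>i j. W i j - HO i j / (lam (j + 1) - lam (r + i + 1)))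
      \<le> 2 * real (min (n - r) r) / \<delta>^2 * specnorm (n - r) r HO * h"
    by (simp add: h_def)
  also have "\<dots> \<le> 2 * n * d / \<delta>^2 * specnorm (n - r) r HO * h"
  proof -
    have "real (min (n - r) r) \<le> n" by simp
    also have "\<dots> \<le> n * d" using mult_left_mono[OF \<open>1 \<le> d\<close>, of n] by simp
    finally show ?thesis
      using specnorm_nonneg[of "n - r" r HO] specnorm_nonneg[of r r HX]
        specnorm_nonneg[of "n - r" "n - r" HS]
      by (intro mult_right_mono divide_right_mono) (simp_all add: h_def)
  qed
  finally show ?thesis by (simp add: \<delta>_def d_def h_def)
qed

end
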